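(* Let $\mathcal{A}_l\subseteq\mathcal{A}$ be nonempty, $\alpha=\frac{T_{\mathrm{off}}}{T_{\mathrm{off}}+T}$, and let $\pi^{(t)}\in\Delta(\mathcal{A}_l)$ be an iterate of the Frank–Wolfe procedure described in the context with $\delta(\pi^{(t)})\le\frac{d_{\mathrm{eff}}}{d}$. Then, with $\tilde\pi^{(t)}=(1-\alpha)\pi^{(t)}+\alpha\pi_{\mathrm{off}}$, $$(1-\alpha)g_{\mathcal{A}_l}(\tilde\pi^{(t)})\le2d_{\mathrm{eff}}.$$
   Context: $\mathcal{A}\subset\mathbb{R}^d$ finite, spanning $\mathbb{R}^d$, $d\ge2$; $\pi_{\mathrm{off}}\in\Delta(\mathcal{A})$; $T\ge1$, $T_{\mathrm{off}}\ge0$ integers. $V_\pi=\sum_a\pi(a)aa^\top$, $g_{\mathcal{B}}(\pi)=\max_{a\in\mathcal{B}}a^\top V_\pi^{-1}a$, $\lambda_k$ the $k$-th smallest eigenvalue, $d_{\mathrm{eff}}=\min\big(\sum_{k=1}^d(1+\frac{T_{\mathrm{off}}}{T}\frac{\lambda_k(V_{\pi_{\mathrm{off}}})}{\max_a\|a\|^2})^{-1},\frac{T}{T_{\mathrm{off}}}g_{\mathcal{A}}(\pi_{\mathrm{off}})\big)$. Frank–Wolfe procedure: initialization $B=\emptyset$, $c=e_1$; for $i=1,\dots,d$ add $a\in\arg\max_{a\in\mathcal{A}_l}|\langle c,a\rangle|$ to $B$ and let $c$ be a nonzero vector orthogonal to all elements of $B$; $\pi^{(0)}$ uniform on $B$.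 For $\pi$ with $(1-\alpha)V_\pi+\alpha V_{\pi_{\mathrm{off}}}$ nonsingular let $H(\pi)=((1-\alpha)V_\pi+\alpha V_{\pi_{\mathrm{off}}})^{-1}$, $w_a=\mathrm{Tr}(H(\pi)((1-\alpha)aa^\top+\alpha V_{\pi_{\mathrm{off}}}))$ for $a\in\mathcal{A}_l$, $a_+\in\arg\max_aw_a$, slack $\delta(\pi)=w_{a_+}/d-1$; update $\pi^{(t+1)}=(1+\beta)^{-1}(\pi^{(t)}+\beta\mathbb{1}_{\{a_+\}})$ with $\beta=\frac{w_{a_+}-d}{(d-1)w_{a_+}}$. *)

theory Defs
  imports "HOL-Analysis.Analysis" "HOL-Computational_Algebra.Polynomial"
begin

definition outer :: "real^'n \<Rightarrow> real^'n^'n" where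
  "outer a = (\<chi> i j. a$i * a$j)"

definition prob_dists :: "(real^'n) set \<Rightarrow> (real^'n \<Rightarrow> real) set" where
  "prob_dists S = {p. (\<forall>a. 0 \<le> p a) \<and> (\<forall>a. a \<notin> S \<longrightarrow> p a = 0) \<and> (\<Sum>a\<in>S. p a) = 1}"

definition Vmat :: "(real^'n) set \<Rightarrow> (real^'n \<Rightarrow> real) \<Rightarrow> real^'n^'n" where
  "Vmat A p = (\<Sum>a\<in>A. p a *\<^sub>R outer a)"

definition gval :: "(real^'n) set \<Rightarrow> (real^'n) set \<Rightarrow> (real^'n \<Rightarrow> real) \<Rightarrow> real" where
  "gval A B p = Max ((\<lambda>a. a \<bullet> (matrix_inv (Vmat A p) *v a)) ` B)"

definition charpoly :: "real^'n^'n \<Rightarrow> real poly" where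
  "charpoly M = det (\<chi> i j. (if i = j then [:0, 1:] else 0) - [:M$i$j:])"

(* lambda_k(M): k-th smallest eigenvalue (with multiplicity), k = 1..CARD('n) *)
definition eigval :: "nat \<Rightarrow> real^'n^'n \<Rightarrow> real" where
  "eigval k M = sorted_list_of_multiset (proots (charpoly M)) ! (k - 1)"

definition alpha :: "nat \<Rightarrow> nat \<Rightarrow> real" where
  "alpha T Toff = real Toff / (real Toff + real T)"

(* d_eff; convention: T/T_off * g_A(pi_off) = +infinity if T_off = 0 or V_{pi_off} singular *)
definition deff :: "(real^'n) set \<Rightarrow> (real^'n \<Rightarrow> real) \<Rightarrow> nat \<Rightarrow> nat \<Rightarrow> real" where
  "deff A poff T Toff =
    (let s = (\<Sum>k=1..CARD('n). inverse (1 + (real Toff / real T) *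
                 (eigval k (Vmat A poff :: real^'n^'n) / Max ((\<lambda>a. (norm a)^2) ` A))))
     in if Toff = 0 \<or> \<not> invertible (Vmat A poff) then s
        else min s ((real T / real Toff) * gval A A poff))"

definition Hmat :: "(real^'n) set \<Rightarrow> (real^'n \<Rightarrow> real) \<Rightarrow> real \<Rightarrow> (real^'n \<Rightarrow> real) \<Rightarrow> real^'n^'n" where
  "Hmat A poff al p = matrix_inv ((1 - al) *\<^sub>R Vmat A p + al *\<^sub>R Vmat A poff)"

definition wval :: "(real^'n) set \<Rightarrow> (real^'n \<Rightarrow> real) \<Rightarrow> real \<Rightarrow> (real^'n \<Rightarrow> real) \<Rightarrow> real^'n \<Rightarrow> real" where
  "wval A poff al p a = trace (Hmat A poff al p ** ((1 - al) *\<^sub>R outer a + al *\<^sub>R Vmat A poff))"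

definition slack :: "(real^'n) set \<Rightarrow> (real^'n) set \<Rightarrow> (real^'n \<Rightarrow> real) \<Rightarrow> real \<Rightarrow> (real^'n \<Rightarrow> real) \<Rightarrow> real" where
  "slack A Al poff al p = Max (wval A poff al p ` Al) / real CARD('n) - 1"

definition e1 :: "(real, 'n::{finite,wellorder}) vec" where
  "e1 = axis (LEAST i. True) 1"

(* admissible outcomes bs = [b_1,...,b_d] of the initialization loop:
   c_1 = e_1, and for i >= 2, c_i is a nonzero vector orthogonal to b_1..b_{i-1};
   b_i in argmax_{a in Al} |<c_i, a>| *)
definition fw_init :: "((real, 'n::{finite,wellorder}) vec) set \<Rightarrow> ((real, 'n) vec) list \<Rightarrow> bool" where
  "fw_init Al bs \<longleftrightarrow> length bs = CARD('n::{finite,wellorder}) \<and>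
     (\<forall>i < CARD('n::{finite,wellorder}). \<exists>c.
        (if i = 0 then c = e1 else c \<noteq> 0 \<and> (\<forall>j < i. c \<bullet> bs ! j = 0)) \<and>
        bs ! i \<in> Al \<and> (\<forall>a\<in>Al. \<bar>c \<bullet> a\<bar> \<le> \<bar>c \<bullet> bs ! i\<bar>))"

definition unif :: "((real, 'n) vec) set \<Rightarrow> real^'n \<Rightarrow> real" where
  "unif B a = (if a \<in> B then 1 / real (card B) else 0)"

(* the iterates pi^(0), pi^(1), ... of the Frank-Wolfe procedure (for any admissible choices) *)
inductive fw_iter :: "((real, 'n::{finite,wellorder}) vec) set \<Rightarrow> ((real, 'n) vec) set \<Rightarrow> ((real, 'n) vec \<Rightarrow> real) \<Rightarrow> real
                       \<Rightarrow> ((real, 'n) vec \<Rightarrow> real) \<Rightarrow> bool"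
  for A Al poff al where
  init: "fw_init Al bs \<Longrightarrow> fw_iter A Al poff al (unif (set bs))"
| step: "fw_iter A Al poff al p \<Longrightarrow>
         invertible ((1 - al) *\<^sub>R Vmat A p + al *\<^sub>R Vmat A poff) \<Longrightarrow>
         ap \<in> Al \<Longrightarrow> (\<forall>a\<in>Al. wval A poff al p a \<le> wval A poff al p ap) \<Longrightarrow>
         \<beta> = (wval A poff al p ap - real CARD('n::{finite,wellorder})) / ((real CARD('n::{finite,wellorder}) - 1) * wval A poff al p ap) \<Longrightarrow>
         fw_iter A Al poff al (\<lambda>a. (p a + \<beta> * (if a = ap then 1 else 0)) / (1 + \<beta>))"

end

theory Submission
  imports Defs
begin

(* Write M = (1 - alpha) V_pi + alpha V_off and H = M^-1.  Since tr (H M) = d, the weight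
   w_a = (1 - alpha) a^T H a + alpha tr (H V_off) equals
   (1 - alpha) a^T H a + d - (1 - alpha) tr (H V_pi), so the slack bound gives
   (1 - alpha) a^T H a <= d_eff + (1 - alpha) tr (H V_pi) for every a in A_l.
   It remains to bound the exploration term (1 - alpha) tr (H V_pi) by both terms of d_eff.
   Expand tr (H V_off) in an orthonormal eigenbasis q_k of V_off; by Cauchy-Schwarz
   q_k^T H q_k >= 1 / q_k^T M q_k >= 1 / ((1 - alpha) L + alpha lambda_k) with L = max ||a||^2,
   hence (1 - alpha) tr (H V_pi) = d - alpha tr (H V_off) <= sum_k (1 + alpha/(1 - alpha) lambda_k/L)^-1.
   On the other hand M >= alpha V_off in the Loewner order, so H <= (alpha V_off)^-1 and
   (1 - alpha) tr (H V_pi) <= (1 - alpha)/alpha g_A(pi_off).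
   The iterates stay probability distributions on A_l because the step size beta is nonnegative:
   the pi-average of the w_a is d, hence max_a w_a >= d. *)

section \<open>Spectral theorem for real symmetric matrices\<close>

lemma symmetric_matrix_inner_commute:
  fixes S :: "real^'n^'n"
  assumes "transpose S = S"
  shows "x \<bullet> (S *v y) = (S *v x) \<bullet> y"
  by (metis assms dot_lmul_matrix transpose_matrix_vector)

lemma discriminant_le_if_quadratic_nonneg:
  fixes a b c :: real
  assumes nonneg: "\<And>t. 0 \<le> a + 2*t*b + t^2*c" and "0 \<le> c"
  shows "b^2 \<le> a * c"
proof (cases "c = 0")
  case True
  have "b = 0"
  proof (rule ccontr)
    assume "b \<noteq> 0"
    have "0 \<le> a + 2*(-(a+1)/(2*b))*b + (-(a+1)/(2*b))^2*c" by (rule nonneg)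
    also have "\<dots> = -1" using True \<open>b \<noteq> 0\<close> by (simp add: field_simps)
    finally show False by simp
  qed
  then show ?thesis using True by simp
next
  case False
  with \<open>0 \<le> c\<close> have c: "c > 0" by simp
  have "0 \<le> a + 2*(-b/c)*b + (-b/c)^2*c" by (rule nonneg)
  also have "\<dots> = a - b^2/c" using c by (simp add: field_simps power2_eq_square)
  finally show ?thesis using c by (simp add: field_simps)
qed

lemma linear_coeff_zero_if_quadratic_nonpos:
  fixes b c :: real
  assumes nonpos: "\<And>t. 2*t*b + t^2*c \<le> 0"
  shows "b = 0"
proof -
  have "c \<le> 0" using nonpos[of 1] nonpos[of "-1"] by simp
  moreover have "0 \<le> 0 + 2*t*(-b) + t^2*(-c)" for t using nonpos[of t] by simp
  ultimately have "(-b)^2 \<le> 0 * (-c)" by (intro discriminant_le_if_quadratic_nonneg) auto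
  then show ?thesis by simp
qed

lemma quadratic_form_attains_max_on_subspace:
  fixes S :: "real^'n^'n"
  assumes W: "subspace W" and "W \<noteq> {0}"
  obtains v where "v \<in> W" "norm v = 1" "\<And>u. u \<in> W \<Longrightarrow> u \<bullet> (S *v u) \<le> (v \<bullet> (S *v v)) * (u \<bullet> u)"
proof -
  define K where "K = W \<inter> sphere 0 1"
  obtain w where w: "w \<in> W" "w \<noteq> 0" using \<open>W \<noteq> {0}\<close> subspace_0[OF W] by auto
  have "w /\<^sub>R norm w \<in> K" unfolding K_def using w W by (simp add: subspace_scale)
  moreover have "compact K" unfolding K_def
    using closed_subspace[OF W] compact_sphere by (simp add: closed_Int_compact)
  moreover have "continuous_on K (\<lambda>x. x \<bullet> (S *v x))"
    by (intro continuous_intros matrix_vector_mult_linear_continuous_on)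
  ultimately obtain v where v: "v \<in> K" and vmax: "\<And>y. y \<in> K \<Longrightarrow> y \<bullet> (S *v y) \<le> v \<bullet> (S *v v)"
    using continuous_attains_sup[of K] by blast
  show thesis
  proof
    show "v \<in> W" "norm v = 1" using v unfolding K_def by auto
    fix u assume u: "u \<in> W"
    show "u \<bullet> (S *v u) \<le> (v \<bullet> (S *v v)) * (u \<bullet> u)"
    proof (cases "u = 0")
      case False
      then have "u /\<^sub>R norm u \<in> K" unfolding K_def using u W by (simp add: subspace_scale)
      then have "(u /\<^sub>R norm u) \<bullet> (S *v (u /\<^sub>R norm u)) \<le> v \<bullet> (S *v v)" by (rule vmax)
      then show ?thesis using False
        by (simp add: matrix_vector_mult_scaleR dot_square_norm field_simps power2_eq_square)
    qed simp
  qed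
qed

lemma maximiser_of_quadratic_form_is_eigenvector:
  fixes S :: "real^'n^'n"
  assumes sym: "transpose S = S" and W: "subspace W" and inv: "\<forall>x\<in>W. S *v x \<in> W"
    and v: "v \<in> W" "v \<bullet> v = 1"
    and vmax: "\<And>u. u \<in> W \<Longrightarrow> u \<bullet> (S *v u) \<le> (v \<bullet> (S *v v)) * (u \<bullet> u)"
  shows "S *v v = (v \<bullet> (S *v v)) *\<^sub>R v"
proof -
  define lam where "lam = v \<bullet> (S *v v)"
  have orth: "v \<bullet> (S *v w) = 0" if w: "w \<in> W" "w \<bullet> v = 0" for w
  proof (rule linear_coeff_zero_if_quadratic_nonpos)
    fix t :: real
    have "v + t *\<^sub>R w \<in> W" using v w W by (simp add: subspace_add subspace_scale)
    then have "(v + t *\<^sub>R w) \<bullet> (S *v (v + t *\<^sub>R w)) \<le> lam * ((v + t *\<^sub>R w) \<bullet> (v + t *\<^sub>R w))"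
      unfolding lam_def by (rule vmax)
    moreover have "w \<bullet> (S *v v) = v \<bullet> (S *v w)"
      using symmetric_matrix_inner_commute[OF sym] by (simp add: inner_commute)
    ultimately show "2*t*(v \<bullet> (S *v w)) + t^2 * (w \<bullet> (S *v w) - lam * (w \<bullet> w)) \<le> 0"
      using v w unfolding lam_def
      by (simp add: algebra_simps power2_eq_square inner_commute)
  qed
  define z where "z = S *v v - lam *\<^sub>R v"
  have "z \<in> W" unfolding z_def using v inv W by (simp add: subspace_diff subspace_scale)
  moreover have zv: "z \<bullet> v = 0"
    unfolding z_def lam_def using v by (simp add: inner_diff_left inner_commute[of "S *v v" v])
  ultimately have "v \<bullet> (S *v z) = 0" by (rule orth)
  moreover have "v \<bullet> (S *v z) = z \<bullet> z"
    using symmetric_matrix_inner_commute[OF sym, of v z] zv unfolding z_def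
    by (simp add: inner_diff_left inner_commute)
  ultimately show ?thesis unfolding z_def lam_def by simp
qed

lemma orthogonal_complement_of_eigenvector:
  fixes S :: "real^'n^'n"
  assumes sym: "transpose S = S" and W: "subspace W" and inv: "\<forall>x\<in>W. S *v x \<in> W"
    and v: "v \<in> W" "norm v = 1" and eig: "S *v v = \<mu> *\<^sub>R v"
  defines "W' \<equiv> {y \<in> W. v \<bullet> y = 0}"
  shows "subspace W'" "dim W = Suc (dim W')" "\<forall>x\<in>W'. S *v x \<in> W'"
proof -
  show "subspace W'" unfolding W'_def using W by (auto simp: subspace_def inner_add_right)
  have "dim {y \<in> W. \<forall>x\<in>span {v}. orthogonal x y} + dim (span {v}) = dim W"
    by (rule dim_subspace_orthogonal_to_vectors) (use v W in \<open>auto simp: span_minimal\<close>)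
  moreover have "{y \<in> W. \<forall>x\<in>span {v}. orthogonal x y} = W'"
    unfolding W'_def orthogonal_def by (auto simp: span_singleton)
  moreover have "dim (span {v}) = 1" using v by (auto simp: dim_insert)
  ultimately show "dim W = Suc (dim W')" by simp
  show "\<forall>x\<in>W'. S *v x \<in> W'"
  proof
    fix x assume x: "x \<in> W'"
    have "v \<bullet> (S *v x) = (S *v v) \<bullet> x" by (rule symmetric_matrix_inner_commute[OF sym])
    also have "\<dots> = 0" using x unfolding W'_def eig by simp
    finally show "S *v x \<in> W'" using x inv unfolding W'_def by simp
  qed
qed

lemma symmetric_invariant_subspace_orthonormal_eigenbasis:
  fixes S :: "real^'n^'n"
  assumes sym: "transpose S = S"
  shows "subspace W \<Longrightarrow> \<forall>x\<in>W. S *v x \<in> W \<Longrightarrow>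
    \<exists>B. B \<subseteq> W \<and> finite B \<and> card B = dim W \<and>
        (\<forall>b\<in>B. norm b = 1 \<and> (\<exists>\<mu>. S *v b = \<mu> *\<^sub>R b)) \<and> pairwise orthogonal B"
proof (induction "dim W" arbitrary: W)
  case 0
  then show ?case by (intro exI[of _ "{}"]) auto
next
  case (Suc n)
  note W = Suc.prems(1) and inv = Suc.prems(2)
  have "W \<noteq> {0}" using Suc.hyps(2) by (metis dim_eq_0 nat.distinct(1) order_refl)
  then obtain v where v: "v \<in> W" "norm v = 1"
    and vmax: "\<And>u. u \<in> W \<Longrightarrow> u \<bullet> (S *v u) \<le> (v \<bullet> (S *v v)) * (u \<bullet> u)"
    using quadratic_form_attains_max_on_subspace[OF W] by metis
  have vv: "v \<bullet> v = 1" using v by (simp add: dot_square_norm)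
  have eig: "S *v v = (v \<bullet> (S *v v)) *\<^sub>R v"
    by (rule maximiser_of_quadratic_form_is_eigenvector[OF sym W inv v(1) vv vmax])
  define W' where "W' = {y \<in> W. v \<bullet> y = 0}"
  note W' = orthogonal_complement_of_eigenvector[OF sym W inv v eig, folded W'_def]
  have "n = dim W'" using Suc.hyps(2) W'(2) by simp
  then obtain B' where B': "B' \<subseteq> W'" "finite B'" "card B' = dim W'"
     "\<forall>b\<in>B'. norm b = 1 \<and> (\<exists>\<mu>. S *v b = \<mu> *\<^sub>R b)" "pairwise orthogonal B'"
    using Suc.hyps(1) W'(1,3) by blast
  have "v \<notin> B'" using B'(1) vv unfolding W'_def by auto
  show ?case
  proof (intro exI[of _ "insert v B'"] conjI)
    show "insert v B' \<subseteq> W" using B'(1) v unfolding W'_def by auto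
    show "card (insert v B') = dim W" using B' \<open>v \<notin> B'\<close> W'(2) by simp
    show "\<forall>b\<in>insert v B'. norm b = 1 \<and> (\<exists>\<mu>. S *v b = \<mu> *\<^sub>R b)" using B' v eig by auto
    show "pairwise orthogonal (insert v B')"
      using B'(1,5) unfolding W'_def pairwise_insert by (auto simp: orthogonal_def inner_commute)
  qed (use B' in simp)
qed

lemma symmetric_matrix_orthonormal_eigenvectors:
  fixes S :: "real^'n^'n"
  assumes sym: "transpose S = S"
  obtains q :: "'n \<Rightarrow> real^'n" and \<mu> :: "'n \<Rightarrow> real"
  where "\<And>i j. q i \<bullet> q j = (if i = j then 1 else 0)" "\<And>i. S *v q i = \<mu> i *\<^sub>R q i"
proof -
  obtain B where B: "finite B" "card B = dim (UNIV :: (real^'n) set)"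
      "\<forall>b\<in>B. norm b = 1 \<and> (\<exists>\<mu>. S *v b = \<mu> *\<^sub>R b)" "pairwise orthogonal B"
    using symmetric_invariant_subspace_orthonormal_eigenbasis[OF sym, of UNIV] by auto
  have "card (UNIV :: 'n set) = card B" using B(2) by simp
  then obtain q where q: "bij_betw q (UNIV :: 'n set) B"
    using finite_same_card_bij[OF finite_class.finite_UNIV B(1)] by blast
  then have qB: "q i \<in> B" for i using bij_betw_apply[OF q] by blast
  define \<mu> where "\<mu> i = (SOME m. S *v q i = m *\<^sub>R q i)" for i
  show thesis
  proof
    fix i j
    show "q i \<bullet> q j = (if i = j then 1 else 0)"
    proof (cases "i = j")
      case True
      then show ?thesis using qB[of i] B(3) by (simp add: norm_eq_1)
    next
      case False
      then have "q i \<noteq> q j" using bij_betw_imp_inj_on[OF q] by (meson inj_on_eq_iff UNIV_I)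
      then show ?thesis
        using qB[of i] qB[of j] B(4) False by (simp add: pairwise_def orthogonal_def)
    qed
  next
    fix i
    have "\<exists>m. S *v q i = m *\<^sub>R q i" using qB[of i] B(3) by blast
    then show "S *v q i = \<mu> i *\<^sub>R q i" unfolding \<mu>_def by (rule someI_ex)
  qed
qed

section \<open>Orthonormal bases, trace and characteristic polynomial\<close>

definition column_matrix :: "('n \<Rightarrow> real^'m) \<Rightarrow> real^'n^'m" where
  "column_matrix q = (\<chi> i j. q j $ i)"

lemma column_matrix_conjugate_component:
  "(transpose (column_matrix q) ** M ** column_matrix q) $ i $ j = q i \<bullet> (M *v q j)"
proof -
  have "transpose (column_matrix q) $ i $ k = q i $ k" for k
    by (simp add: transpose_def column_matrix_def)
  moreover have "(M ** column_matrix q) $ k $ j = (M *v q j) $ k" for k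
    by (simp add: column_matrix_def matrix_matrix_mult_def matrix_vector_mult_def)
  ultimately show ?thesis
    unfolding matrix_mul_assoc[symmetric]
    unfolding matrix_matrix_mult_def[of "transpose (column_matrix q)"]
    by (simp add: inner_vec_def)
qed

lemma orthogonal_column_matrix:
  fixes q :: "'n \<Rightarrow> real^'n"
  assumes "\<And>i j. q i \<bullet> q j = (if i = j then 1 else 0)"
  shows "orthogonal_matrix (column_matrix q)"
proof -
  have "column i (column_matrix q) = q i" for i
    by (simp add: column_def column_matrix_def)
  then show ?thesis
    using assms by (simp add: orthogonal_matrix_orthonormal_columns norm_eq_1 orthogonal_def)
qed

lemma trace_eq_sum_orthonormal:
  fixes M :: "real^'n^'n" and q :: "'n \<Rightarrow> real^'n"
  assumes "\<And>i j. q i \<bullet> q j = (if i = j then 1 else 0)"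
  shows "trace M = (\<Sum>i\<in>UNIV. q i \<bullet> (M *v q i))"
proof -
  let ?Q = "column_matrix q"
  have "trace M = trace (M ** (?Q ** transpose ?Q))"
    using orthogonal_column_matrix[OF assms] by (simp add: orthogonal_matrix_def)
  also have "\<dots> = trace (transpose ?Q ** M ** ?Q)"
    by (metis matrix_mul_assoc trace_mul_sym)
  finally show ?thesis by (simp add: trace_def column_matrix_conjugate_component)
qed

lemma det_eq_det_orthonormal:
  fixes M :: "real^'n^'n" and q :: "'n \<Rightarrow> real^'n"
  assumes "\<And>i j. q i \<bullet> q j = (if i = j then 1 else 0)"
  shows "det M = det (\<chi> i j. q i \<bullet> (M *v q j))"
proof -
  let ?Q = "column_matrix q"
  have "det ?Q * det ?Q = 1"
    using det_orthogonal_matrix[OF orthogonal_column_matrix[OF assms]] by auto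
  then have "det M = det (transpose ?Q ** M ** ?Q)"
    by (simp add: det_mul)
  also have "transpose ?Q ** M ** ?Q = (\<chi> i j. q i \<bullet> (M *v q j))"
    by (simp add: vec_eq_iff column_matrix_conjugate_component)
  finally show ?thesis .
qed

lemma poly_charpoly: "poly (charpoly M) x = det (mat x - M)"
  unfolding charpoly_def det_def
  by (simp add: poly_sum poly_prod mat_def if_distrib[of "\<lambda>p. poly p x"] cong: if_cong)

lemma charpoly_eq_prod_eigenvalues:
  fixes S :: "real^'n^'n" and \<mu> :: "'n \<Rightarrow> real"
  assumes on: "\<And>i j. q i \<bullet> q j = (if i = j then 1 else 0)"
    and eig: "\<And>i. S *v q i = \<mu> i *\<^sub>R q i"
  shows "charpoly S = (\<Prod>i\<in>UNIV. [:- \<mu> i, 1:])"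
proof (rule poly_ext)
  fix x
  have "mat x *v v = x *\<^sub>R v" for v :: "real^'n"
    by (simp add: vec_eq_iff matrix_vector_mult_def mat_def if_distrib if_distribR
        cong del: if_weak_cong)
  then have "(mat x - S) *v q j = (x - \<mu> j) *\<^sub>R q j" for j
    using eig by (simp add: matrix_vector_mult_diff_rdistrib scaleR_diff_left)
  then have "det (mat x - S) = det (\<chi> i j. (x - \<mu> j) * (if i = j then 1 else 0))"
    using det_eq_det_orthonormal[OF on, of "mat x - S"] on by (simp cong: if_cong)
  also have "\<dots> = (\<Prod>i\<in>UNIV. x - \<mu> i)" by (simp add: det_diagonal)
  finally show "poly (charpoly S) x = poly (\<Prod>i\<in>UNIV. [:- \<mu> i, 1:]) x"
    by (simp add: poly_charpoly poly_prod)
qed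

lemma sum_eigval_eq:
  fixes S :: "real^'n^'n" and \<mu> :: "'n \<Rightarrow> real"
  assumes "charpoly S = (\<Prod>i\<in>UNIV. [:- \<mu> i, 1:])"
  shows "(\<Sum>k=1..CARD('n). f (eigval k S)) = (\<Sum>i\<in>UNIV. f (\<mu> i))"
proof -
  define L where "L = sorted_list_of_multiset (image_mset \<mu> (mset_set (UNIV :: 'n set)))"
  have "proots (charpoly S) = (\<Sum>i\<in>UNIV. {#\<mu> i#})"
    unfolding assms by (subst proots_prod) auto
  also have "\<dots> = image_mset \<mu> (mset_set UNIV)"
    by (simp add: sum_unfold_sum_mset)
  finally have L: "eigval k S = L ! (k - 1)" for k
    unfolding eigval_def L_def by simp
  have mL: "mset L = image_mset \<mu> (mset_set UNIV)" unfolding L_def by simp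
  then have "length L = CARD('n)" by (metis size_image_mset size_mset size_mset_set)
  then have "(\<Sum>k=1..CARD('n). f (eigval k S)) = sum_list (map f L)"
    by (simp add: L sum.atLeast1_atMost_eq sum_list_sum_nth atLeast0LessThan)
  also have "\<dots> = sum_mset (image_mset f (image_mset \<mu> (mset_set UNIV)))"
    by (metis mL mset_map sum_mset_sum_list)
  also have "\<dots> = (\<Sum>i\<in>UNIV. f (\<mu> i))"
    by (simp add: sum_unfold_sum_mset image_mset.compositionality comp_def)
  finally show ?thesis .
qed

section \<open>Quadratic forms of inverse matrices\<close>

lemma matrix_inv_right: "invertible M \<Longrightarrow> M ** matrix_inv M = mat 1"
  and matrix_inv_left: "invertible M \<Longrightarrow> matrix_inv M ** M = mat 1"
  for M :: "real^'n^'n"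
  unfolding invertible_def matrix_inv_def by (metis (mono_tags, lifting) someI_ex)+

lemma quadratic_form_cauchy_schwarz:
  fixes S :: "real^'n^'n"
  assumes sym: "transpose S = S" and psd: "\<And>x. 0 \<le> x \<bullet> (S *v x)"
  shows "(u \<bullet> (S *v v))^2 \<le> (u \<bullet> (S *v u)) * (v \<bullet> (S *v v))"
proof (rule discriminant_le_if_quadratic_nonneg)
  fix t :: real
  have "v \<bullet> (S *v u) = u \<bullet> (S *v v)"
    using symmetric_matrix_inner_commute[OF sym, of v u] by (simp add: inner_commute)
  then have "(u + t *\<^sub>R v) \<bullet> (S *v (u + t *\<^sub>R v))
      = u \<bullet> (S *v u) + 2*t*(u \<bullet> (S *v v)) + t^2*(v \<bullet> (S *v v))"
    by (simp add: algebra_simps power2_eq_square)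
  then show "0 \<le> u \<bullet> (S *v u) + 2*t*(u \<bullet> (S *v v)) + t^2*(v \<bullet> (S *v v))"
    using psd[of "u + t *\<^sub>R v"] by simp
qed (rule psd)

lemma inner_square_le_quadratic_form_mult_inverse:
  fixes M :: "real^'n^'n"
  assumes "invertible M" "transpose M = M" "\<And>x. 0 \<le> x \<bullet> (M *v x)"
  shows "(q \<bullet> q)^2 \<le> (q \<bullet> (M *v q)) * (q \<bullet> (matrix_inv M *v q))"
proof -
  let ?u = "matrix_inv M *v q"
  have Mu: "M *v ?u = q" by (simp add: matrix_vector_mul_assoc matrix_inv_right[OF assms(1)])
  have "(q \<bullet> (M *v ?u))^2 \<le> (q \<bullet> (M *v q)) * (?u \<bullet> (M *v ?u))"
    by (rule quadratic_form_cauchy_schwarz[OF assms(2,3)])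
  then show ?thesis by (simp add: Mu inner_commute)
qed

lemma quadratic_form_matrix_inv_antimono:
  fixes M B :: "real^'n^'n"
  assumes M: "invertible M" and B: "invertible B" "transpose B = B" "\<And>x. 0 \<le> x \<bullet> (B *v x)"
    and "c > 0" and le: "\<And>x. c * (x \<bullet> (B *v x)) \<le> x \<bullet> (M *v x)"
  shows "c * (x \<bullet> (matrix_inv M *v x)) \<le> x \<bullet> (matrix_inv B *v x)"
proof -
  define u where "u = matrix_inv M *v x"
  define y where "y = matrix_inv B *v x"
  define r where "r = x \<bullet> u"
  have Mu: "M *v u = x"
    unfolding u_def by (simp add: matrix_vector_mul_assoc matrix_inv_right[OF M])
  have By: "B *v y = x"
    unfolding y_def by (simp add: matrix_vector_mul_assoc matrix_inv_right[OF B(1)])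
  have cr: "c * (u \<bullet> (B *v u)) \<le> r" using le[of u] unfolding r_def Mu by (simp add: inner_commute)
  have "0 \<le> x \<bullet> y" using B(3)[of y] By by (simp add: inner_commute)
  have "0 \<le> r" using cr B(3)[of u] \<open>c > 0\<close> by (meson less_imp_le mult_nonneg_nonneg order_trans)
  have "r^2 \<le> (u \<bullet> (B *v u)) * (x \<bullet> y)"
    using quadratic_form_cauchy_schwarz[OF B(2,3), of u y] By unfolding r_def
    by (simp add: inner_commute)
  then have "c * r^2 \<le> (c * (u \<bullet> (B *v u))) * (x \<bullet> y)"
    using \<open>c > 0\<close> by (simp add: mult.assoc)
  also have "\<dots> \<le> r * (x \<bullet> y)" using cr \<open>0 \<le> x \<bullet> y\<close> by (rule mult_right_mono)
  finally have "c * r \<le> x \<bullet> y" if "r > 0" using that by (simp add: power2_eq_square)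
  then show ?thesis using \<open>0 \<le> r\<close> \<open>0 \<le> x \<bullet> y\<close> unfolding r_def u_def y_def
    by (cases "x \<bullet> (matrix_inv M *v x) = 0") auto
qed

section \<open>Design matrices\<close>

lemma Vmat_component: "Vmat A p $ i $ j = (\<Sum>a\<in>A. p a * (a $ i * a $ j))"
  by (simp add: Vmat_def outer_def)

lemma symmetric_Vmat: "transpose (Vmat A p) = Vmat A p"
  by (simp add: vec_eq_iff transpose_def Vmat_component mult.commute)

lemma Vmat_mixture: "Vmat A (\<lambda>a. c * p a + e * q a) = c *\<^sub>R Vmat A p + e *\<^sub>R Vmat A q"
  by (simp add: Vmat_def scaleR_add_left sum.distrib scaleR_sum_right)

lemma Vmat_mult_vector: "Vmat A p *v x = (\<Sum>a\<in>A. (p a * (a \<bullet> x)) *\<^sub>R a)"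
proof -
  have "(\<Sum>j\<in>UNIV. (\<Sum>a\<in>A. p a * (a $ i * a $ j)) * x $ j)
      = (\<Sum>a\<in>A. p a * (\<Sum>j\<in>UNIV. a $ j * x $ j) * a $ i)" for i
    by (simp add: sum_distrib_left sum_distrib_right algebra_simps sum.swap[of _ UNIV A])
  then show ?thesis
    by (simp add: vec_eq_iff matrix_vector_mult_def Vmat_component inner_vec_def)
qed

lemma quadratic_form_Vmat: "x \<bullet> (Vmat A p *v x) = (\<Sum>a\<in>A. p a * (a \<bullet> x)^2)"
  by (simp add: Vmat_mult_vector inner_sum_right power2_eq_square mult.assoc inner_commute)

lemma quadratic_form_Vmat_nonneg: "(\<And>a. 0 \<le> p a) \<Longrightarrow> 0 \<le> x \<bullet> (Vmat A p *v x)"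
  unfolding quadratic_form_Vmat by (simp add: sum_nonneg)

lemma quadratic_form_Vmat_le:
  assumes p: "p \<in> prob_dists A" and L: "\<And>a. a \<in> A \<Longrightarrow> (norm a)^2 \<le> L" and "norm x = 1"
  shows "x \<bullet> (Vmat A p *v x) \<le> L"
proof -
  have "p a * (a \<bullet> x)^2 \<le> p a * L" if "a \<in> A" for a
  proof -
    have "\<bar>a \<bullet> x\<bar> \<le> norm a" using Cauchy_Schwarz_ineq2[of a x] \<open>norm x = 1\<close> by simp
    then have "(a \<bullet> x)^2 \<le> (norm a)^2" by (metis abs_ge_zero power2_abs power_mono)
    then have "(a \<bullet> x)^2 \<le> L" using L[OF that] by linarith
    then show ?thesis using p by (simp add: prob_dists_def mult_left_mono)
  qed
  then have "x \<bullet> (Vmat A p *v x) \<le> (\<Sum>a\<in>A. p a * L)"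
    unfolding quadratic_form_Vmat by (rule sum_mono)
  also have "\<dots> = L" using p by (simp add: prob_dists_def flip: sum_distrib_right)
  finally show ?thesis .
qed

lemma trace_scaleR: "trace (c *\<^sub>R X) = c * trace (X :: real^'n^'n)"
  by (simp add: trace_def sum_distrib_left)

lemma trace_mult_outer: "trace (H ** outer a) = a \<bullet> (H *v a)"
  by (simp add: trace_def matrix_matrix_mult_def outer_def inner_vec_def matrix_vector_mult_def
      sum_distrib_left sum_distrib_right algebra_simps)

lemma trace_mult_Vmat: "trace (H ** Vmat A p) = (\<Sum>a\<in>A. p a * (a \<bullet> (H *v a)))"
proof -
  have "trace (H ** Vmat A p) = (\<Sum>i\<in>UNIV. \<Sum>k\<in>UNIV. H $ i $ k * (\<Sum>a\<in>A. p a * (a $ k * a $ i)))"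
    by (simp add: trace_def matrix_matrix_mult_def Vmat_component)
  also have "\<dots> = (\<Sum>a\<in>A. p a * (\<Sum>i\<in>UNIV. a $ i * (\<Sum>k\<in>UNIV. H $ i $ k * a $ k)))"
    by (simp add: sum_distrib_left sum_distrib_right algebra_simps sum.swap[of _ UNIV A])
  finally show ?thesis by (simp add: inner_vec_def matrix_vector_mult_def)
qed

lemma trace_mult_combination:
  fixes H X Y :: "real^'n^'n"
  shows "trace (H ** (c *\<^sub>R X + e *\<^sub>R Y)) = c * trace (H ** X) + e * trace (H ** Y)"
  by (simp add: matrix_add_ldistrib trace_add matrix_scalar_ac trace_scaleR
      flip: scalar_matrix_assoc)

lemma wval_eq:
  "wval A poff al p a
     = (1 - al) * (a \<bullet> (Hmat A poff al p *v a)) + al * trace (Hmat A poff al p ** Vmat A poff)"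
  unfolding wval_def by (simp add: trace_mult_combination trace_mult_outer)

lemma trace_Hmat_mixture:
  fixes A :: "(real^'n) set"
  assumes "invertible ((1 - al) *\<^sub>R Vmat A p + al *\<^sub>R Vmat A poff)"
  shows "(1 - al) * trace (Hmat A poff al p ** Vmat A p)
      + al * trace (Hmat A poff al p ** Vmat A poff) = real CARD('n)"
  using matrix_inv_left[OF assms]
  by (simp add: Hmat_def trace_I flip: trace_mult_combination)

section \<open>Frank-Wolfe iterates\<close>

lemma prob_dists_mono:
  assumes "finite A" "Al \<subseteq> A"
  shows "prob_dists Al \<subseteq> prob_dists A"
proof
  fix p assume p: "p \<in> prob_dists Al"
  then have "(\<Sum>a\<in>A. p a) = (\<Sum>a\<in>Al. p a)"
    using assms by (intro sum.mono_neutral_right) (auto simp: prob_dists_def)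
  then show "p \<in> prob_dists A" using p assms(2) by (auto simp: prob_dists_def)
qed

lemma sum_prob_mult_wval:
  fixes A Al :: "(real^'n) set"
  assumes "finite A" "Al \<subseteq> A" "p \<in> prob_dists Al"
    and "invertible ((1 - al) *\<^sub>R Vmat A p + al *\<^sub>R Vmat A poff)"
  shows "(\<Sum>a\<in>Al. p a * wval A poff al p a) = real CARD('n)"
proof -
  let ?H = "Hmat A poff al p"
  have "(\<Sum>a\<in>Al. p a * (a \<bullet> (?H *v a))) = (\<Sum>a\<in>A. p a * (a \<bullet> (?H *v a)))"
    using assms by (intro sum.mono_neutral_left) (auto simp: prob_dists_def)
  then have "(\<Sum>a\<in>Al. p a * (a \<bullet> (?H *v a))) = trace (?H ** Vmat A p)"
    by (simp add: trace_mult_Vmat)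
  moreover have "p a * wval A poff al p a
      = (1 - al) * (p a * (a \<bullet> (?H *v a))) + (al * trace (?H ** Vmat A poff)) * p a" for a
    by (simp add: wval_eq algebra_simps)
  ultimately have "(\<Sum>a\<in>Al. p a * wval A poff al p a)
      = (1 - al) * trace (?H ** Vmat A p) + al * trace (?H ** Vmat A poff) * (\<Sum>a\<in>Al. p a)"
    by (simp add: sum.distrib flip: sum_distrib_left sum_distrib_right)
  then show ?thesis using assms(3) trace_Hmat_mixture[OF assms(4)] by (simp add: prob_dists_def)
qed

lemma unif_prob_dists:
  assumes "finite S" "B \<subseteq> S" "B \<noteq> {}"
  shows "unif B \<in> prob_dists S"
proof -
  have "card B \<noteq> 0" using finite_subset[OF assms(2,1)] assms(3) by simp
  have "(\<Sum>a\<in>S. unif B a) = (\<Sum>a\<in>B. 1 / real (card B))"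
    unfolding unif_def using assms by (intro sum.mono_neutral_cong_right) auto
  also have "\<dots> = 1" using \<open>card B \<noteq> 0\<close> by simp
  finally show ?thesis using assms(2) by (auto simp: prob_dists_def unif_def)
qed

lemma prob_dists_shift_mass:
  assumes p: "p \<in> prob_dists S" and "finite S" "b \<in> S" "0 \<le> \<beta>"
  shows "(\<lambda>a. (p a + \<beta> * (if a = b then 1 else 0)) / (1 + \<beta>)) \<in> prob_dists S"
proof -
  have p_nonneg: "0 \<le> p a" and p_outside: "a \<notin> S \<Longrightarrow> p a = 0" and p_sum: "(\<Sum>a\<in>S. p a) = 1" for a
    using p by (auto simp: prob_dists_def)
  have "(\<Sum>a\<in>S. p a + \<beta> * (if a = b then 1 else 0)) = 1 + \<beta>"
    using assms(2,3) p_sum by (simp add: sum.distrib flip: sum_distrib_left)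
  then have "(\<Sum>a\<in>S. (p a + \<beta> * (if a = b then 1 else 0)) / (1 + \<beta>)) = 1"
    using \<open>0 \<le> \<beta>\<close> by (simp flip: sum_divide_distrib)
  moreover have "0 \<le> (p a + \<beta> * (if a = b then 1 else 0)) / (1 + \<beta>)" for a
    using p_nonneg[of a] \<open>0 \<le> \<beta>\<close> by simp
  ultimately show ?thesis using p_outside \<open>b \<in> S\<close> unfolding prob_dists_def by auto
qed

lemma fw_iter_prob_dists:
  fixes A Al :: "((real, 'n::{finite,wellorder}) vec) set"
  assumes "fw_iter A Al poff al p" "finite A" "Al \<subseteq> A" "CARD('n) \<ge> 2"
  shows "p \<in> prob_dists Al"
  using assms(1)
proof induction
  case (init bs)
  then have "length bs = CARD('n)" "\<forall>i<length bs. bs ! i \<in> Al"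
    unfolding fw_init_def by auto
  then have "set bs \<subseteq> Al" "set bs \<noteq> {}" by (auto simp: in_set_conv_nth)
  then show ?case by (rule unif_prob_dists[OF finite_subset[OF assms(3,2)]])
next
  case (step p ap \<beta>)
  let ?w = "wval A poff al p"
  have "real CARD('n) = (\<Sum>a\<in>Al. p a * ?w a)"
    using sum_prob_mult_wval[OF assms(2,3) step.IH step.hyps(2)] by simp
  also have "\<dots> \<le> (\<Sum>a\<in>Al. p a * ?w ap)"
    using step.IH step.hyps(4) by (intro sum_mono mult_left_mono) (auto simp: prob_dists_def)
  also have "\<dots> = ?w ap" using step.IH by (simp add: prob_dists_def flip: sum_distrib_right)
  finally have "real CARD('n) \<le> ?w ap" .
  then have "0 \<le> \<beta>" unfolding step.hyps(5) using assms(4) by (simp add: divide_nonneg_pos)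
  then show ?case
    by (rule prob_dists_shift_mass[OF step.IH finite_subset[OF assms(3,2)] step.hyps(3)])
qed

section \<open>The exploration term\<close>

locale mixed_design =
  fixes A :: "(real^'n) set" and p poff :: "real^'n \<Rightarrow> real" and al L :: real
  assumes finite_A: "finite A" and p: "p \<in> prob_dists A" and poff_nonneg: "\<And>a. 0 \<le> poff a"
    and al: "0 \<le> al" "al < 1"
    and L: "\<And>a. a \<in> A \<Longrightarrow> (norm a)^2 \<le> L" "0 < L"
    and invertible: "invertible ((1 - al) *\<^sub>R Vmat A p + al *\<^sub>R Vmat A poff)"
begin

abbreviation "M \<equiv> (1 - al) *\<^sub>R Vmat A p + al *\<^sub>R Vmat A poff"
abbreviation "H \<equiv> Hmat A poff al p"

lemma quadratic_form_M:
  "x \<bullet> (M *v x) = (1 - al) * (x \<bullet> (Vmat A p *v x)) + al * (x \<bullet> (Vmat A poff *v x))"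
  by (simp add: matrix_vector_mult_add_rdistrib inner_add_right flip: scaleR_matrix_vector_assoc)

lemma quadratic_form_Vmat_p_nonneg: "0 \<le> x \<bullet> (Vmat A p *v x)"
  using p by (intro quadratic_form_Vmat_nonneg) (simp add: prob_dists_def)

lemma quadratic_form_Vmat_poff_nonneg: "0 \<le> x \<bullet> (Vmat A poff *v x)"
  using poff_nonneg by (rule quadratic_form_Vmat_nonneg)

lemma M_psd: "0 \<le> x \<bullet> (M *v x)"
  unfolding quadratic_form_M using al quadratic_form_Vmat_p_nonneg quadratic_form_Vmat_poff_nonneg
  by simp

lemma M_symmetric: "transpose M = M"
  using symmetric_Vmat[of A p] symmetric_Vmat[of A poff] by (simp add: vec_eq_iff transpose_def)

lemma quadratic_form_H_lower:
  assumes "norm q = 1"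
  shows "1 / ((1 - al) * L + al * (q \<bullet> (Vmat A poff *v q))) \<le> q \<bullet> (H *v q)"
proof -
  let ?m = "q \<bullet> (M *v q)" and ?h = "q \<bullet> (H *v q)"
  have "1 \<le> ?m * ?h"
    using inner_square_le_quadratic_form_mult_inverse[OF invertible M_symmetric M_psd, of q] assms
    by (simp add: Hmat_def norm_eq_1)
  moreover have "?m \<le> (1 - al) * L + al * (q \<bullet> (Vmat A poff *v q))"
    unfolding quadratic_form_M
    using mult_left_mono[OF quadratic_form_Vmat_le[OF p L(1) assms], of "1 - al"] al by simp
  moreover have "0 < ?h"
  proof (rule ccontr)
    assume "\<not> 0 < ?h"
    then have "?m * ?h \<le> 0" using M_psd[of q] by (simp add: mult_nonneg_nonpos)
    with \<open>1 \<le> ?m * ?h\<close> show False by simp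
  qed
  ultimately have "1 \<le> ((1 - al) * L + al * (q \<bullet> (Vmat A poff *v q))) * ?h"
    by (meson mult_right_mono order_trans less_imp_le)
  then show ?thesis
    using al L(2) quadratic_form_Vmat_poff_nonneg[of q]
    by (simp add: divide_le_eq mult.commute add_pos_nonneg)
qed

lemma trace_le_eigval_sum:
  "(1 - al) * trace (H ** Vmat A p)
     \<le> (\<Sum>k=1..CARD('n). inverse (1 + (al / (1 - al)) * (eigval k (Vmat A poff) / L)))"
proof -
  obtain q :: "'n \<Rightarrow> real^'n" and \<mu> where
    on: "\<And>i j. q i \<bullet> q j = (if i = j then 1 else 0)" and eig: "\<And>i. Vmat A poff *v q i = \<mu> i *\<^sub>R q i"
    using symmetric_matrix_orthonormal_eigenvectors[OF symmetric_Vmat] by blast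
  have \<mu>: "\<mu> i = q i \<bullet> (Vmat A poff *v q i)" for i using on[of i i] by (simp add: eig)
  have "(1 - al) * trace (H ** Vmat A p) = real CARD('n) - al * trace (H ** Vmat A poff)"
    using trace_Hmat_mixture[OF invertible] by simp
  also have "\<dots> = (\<Sum>i\<in>UNIV. 1 - al * \<mu> i * (q i \<bullet> (H *v q i)))"
    by (simp add: trace_eq_sum_orthonormal[OF on] sum_subtractf sum_distrib_left mult.assoc
        eig matrix_vector_mult_scaleR flip: matrix_vector_mul_assoc)
  also have "\<dots> \<le> (\<Sum>i\<in>UNIV. 1 - al * \<mu> i * (1 / ((1 - al) * L + al * \<mu> i)))"
  proof (intro sum_mono)
    fix i
    have "0 \<le> al * \<mu> i" using al quadratic_form_Vmat_poff_nonneg \<mu> by simp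
    moreover have "norm (q i) = 1" using on[of i i] by (simp add: norm_eq_1)
    ultimately show "1 - al * \<mu> i * (q i \<bullet> (H *v q i))
        \<le> 1 - al * \<mu> i * (1 / ((1 - al) * L + al * \<mu> i))"
      using mult_left_mono[OF quadratic_form_H_lower] \<mu> by simp
  qed
  also have "\<dots> = (\<Sum>i\<in>UNIV. inverse (1 + (al / (1 - al)) * (\<mu> i / L)))"
  proof (rule sum.cong[OF refl])
    fix i
    have "0 < (1 - al) * L + al * \<mu> i"
      using al L(2) quadratic_form_Vmat_poff_nonneg \<mu> by (simp add: add_pos_nonneg)
    then show "1 - al * \<mu> i * (1 / ((1 - al) * L + al * \<mu> i))
        = inverse (1 + (al / (1 - al)) * (\<mu> i / L))"
      using al L(2) by (simp add: field_simps)
  qed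
  also have "\<dots> = (\<Sum>k=1..CARD('n). inverse (1 + (al / (1 - al)) * (eigval k (Vmat A poff) / L)))"
    by (rule sum_eigval_eq[OF charpoly_eq_prod_eigenvalues[OF on eig], symmetric])
  finally show ?thesis .
qed

lemma trace_le_gval:
  assumes "0 < al" and V: "invertible (Vmat A poff)"
  shows "(1 - al) * trace (H ** Vmat A p) \<le> ((1 - al) / al) * gval A A poff"
proof -
  have "p a * (a \<bullet> (H *v a)) \<le> p a * (gval A A poff / al)" if "a \<in> A" for a
  proof -
    have "al * (a \<bullet> (H *v a)) \<le> a \<bullet> (matrix_inv (Vmat A poff) *v a)"
      unfolding Hmat_def
      using quadratic_form_Vmat_p_nonneg al
      by (intro quadratic_form_matrix_inv_antimono[OF invertible V symmetric_Vmat
            quadratic_form_Vmat_poff_nonneg \<open>0 < al\<close>]) (simp add: quadratic_form_M)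
    also have "\<dots> \<le> gval A A poff"
      unfolding gval_def using finite_A that by (intro Max_ge) auto
    finally show ?thesis
      using p \<open>0 < al\<close> by (intro mult_left_mono) (simp_all add: prob_dists_def field_simps)
  qed
  then have "trace (H ** Vmat A p) \<le> (\<Sum>a\<in>A. p a) * (gval A A poff / al)"
    unfolding trace_mult_Vmat sum_distrib_right by (rule sum_mono)
  then have "trace (H ** Vmat A p) \<le> gval A A poff / al" using p by (simp add: prob_dists_def)
  then show ?thesis using mult_left_mono[of _ _ "1 - al"] al by fastforce
qed

end

lemma spanning_set_has_nonzero:
  assumes "span A = (UNIV :: (real^'n) set)"
  shows "\<exists>a\<in>A. a \<noteq> 0"
proof (rule ccontr)
  assume "\<not> (\<exists>a\<in>A. a \<noteq> 0)"
  then have "span A \<subseteq> {0}" using span_mono[of A "{0}"] by auto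
  moreover have "axis undefined (1::real) \<noteq> 0" by simp
  ultimately show False using assms by blast
qed

lemma alpha_bounds: "T \<ge> 1 \<Longrightarrow> 0 \<le> alpha T Toff \<and> alpha T Toff < 1"
  by (simp add: alpha_def divide_less_eq)

lemma trace_Hmat_Vmat_le_deff:
  fixes A :: "(real^'n) set"
  assumes "finite A" "\<exists>a\<in>A. a \<noteq> 0" "p \<in> prob_dists A" "\<And>a. 0 \<le> poff a" "T \<ge> 1"
    and "invertible ((1 - alpha T Toff) *\<^sub>R Vmat A p + alpha T Toff *\<^sub>R Vmat A poff)"
  shows "(1 - alpha T Toff) * trace (Hmat A poff (alpha T Toff) p ** Vmat A p) \<le> deff A poff T Toff"
proof -
  define al where "al = alpha T Toff"
  define L where "L = Max ((\<lambda>a. (norm a)^2) ` A)"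
  have L: "(norm a)^2 \<le> L" if "a \<in> A" for a unfolding L_def using assms(1) that by simp
  obtain a0 where "a0 \<in> A" "a0 \<noteq> 0" using assms(2) by blast
  then have "0 < L" using L[of a0] by (simp add: order_less_le_trans[of 0 "(norm a0)^2"])
  interpret mixed_design A p poff al L
    using assms alpha_bounds[OF assms(5)] L \<open>0 < L\<close> unfolding al_def by unfold_locales auto
  have T: "0 < real T" using assms(5) by simp
  have "1 - al = real T / (real Toff + real T)"
    unfolding al_def alpha_def using T by (simp add: field_simps)
  then have ratio: "al / (1 - al) = real Toff / real T" "(1 - al) / al = real T / real Toff"
    unfolding al_def alpha_def using T by simp_all
  let ?tr = "(1 - al) * trace (Hmat A poff al p ** Vmat A p)"
  have "?tr \<le> (\<Sum>k=1..CARD('n). inverse (1 + (real Toff / real T) * (eigval k (Vmat A poff) / L)))"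
    using trace_le_eigval_sum unfolding ratio .
  moreover have "?tr \<le> (real T / real Toff) * gval A A poff"
    if "Toff \<noteq> 0" "invertible (Vmat A poff)"
  proof -
    have "0 < al" using that T unfolding al_def alpha_def by simp
    then show ?thesis using trace_le_gval[OF _ that(2)] unfolding ratio by blast
  qed
  ultimately show ?thesis unfolding deff_def Let_def al_def L_def by simp
qed

lemma quadratic_form_Hmat_le_slack:
  fixes A Al :: "(real^'n) set"
  assumes "finite Al" "a \<in> Al" "invertible ((1 - al) *\<^sub>R Vmat A p + al *\<^sub>R Vmat A poff)"
  shows "(1 - al) * (a \<bullet> (Hmat A poff al p *v a))
    \<le> real CARD('n) * slack A Al poff al p + (1 - al) * trace (Hmat A poff al p ** Vmat A p)"
proof -
  have "wval A poff al p a \<le> Max (wval A poff al p ` Al)" using assms(1,2) by simp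
  also have "\<dots> = real CARD('n) * slack A Al poff al p + real CARD('n)"
    by (simp add: slack_def field_simps)
  finally show ?thesis using wval_eq[of A poff al p a] trace_Hmat_mixture[OF assms(3)] by linarith
qed

lemma gval_mixture:
  "gval A B (\<lambda>a. (1 - al) * p a + al * poff a) = Max ((\<lambda>a. a \<bullet> (Hmat A poff al p *v a)) ` B)"
  by (simp add: gval_def Hmat_def Vmat_mixture)

theorem proposition5p7:
  fixes A Al :: "((real, 'n::{finite,wellorder}) vec) set"
    and poff p :: "(real, 'n) vec \<Rightarrow> real"
    and T Toff :: nat
  assumes "finite A" and "span A = UNIV" and "CARD('n::{finite,wellorder}) \<ge> 2"
    and "poff \<in> prob_dists A"
    and "T \<ge> 1"
    and "Al \<subseteq> A" and "Al \<noteq> {}"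
    and "fw_iter A Al poff (alpha T Toff) p"
    and "invertible ((1 - alpha T Toff) *\<^sub>R Vmat A p + alpha T Toff *\<^sub>R Vmat A poff)"
    and "slack A Al poff (alpha T Toff) p \<le> deff A poff T Toff / real CARD('n::{finite,wellorder})"
  shows "(1 - alpha T Toff) *
           gval A Al (\<lambda>a. (1 - alpha T Toff) * p a + alpha T Toff * poff a)
         \<le> 2 * deff A poff T Toff"
proof -
  let ?H = "Hmat A poff (alpha T Toff) p"
  have "finite Al" using assms(1,6) finite_subset by blast
  have p: "p \<in> prob_dists A"
    using fw_iter_prob_dists[OF assms(8,1,6,3)] prob_dists_mono[OF assms(1,6)] by blast
  have "\<And>a. 0 \<le> poff a" using assms(4) by (simp add: prob_dists_def)
  with p spanning_set_has_nonzero[OF assms(2)]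
  have explore: "(1 - alpha T Toff) * trace (?H ** Vmat A p) \<le> deff A poff T Toff"
    using trace_Hmat_Vmat_le_deff assms(1,5,9) by blast
  have "real CARD('n) * slack A Al poff (alpha T Toff) p \<le> deff A poff T Toff"
    using assms(10) by (simp add: field_simps)
  then have "(1 - alpha T Toff) * (a \<bullet> (?H *v a)) \<le> 2 * deff A poff T Toff" if "a \<in> Al" for a
    using quadratic_form_Hmat_le_slack[OF \<open>finite Al\<close> that assms(9)] explore by simp
  moreover obtain a where "a \<in> Al" "Max ((\<lambda>a. a \<bullet> (?H *v a)) ` Al) = a \<bullet> (?H *v a)"
    using Max_in[of "(\<lambda>a. a \<bullet> (?H *v a)) ` Al"] \<open>finite Al\<close> assms(7) by fastforce
  ultimately show ?thesis by (simp add: gval_mixture)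
qed

end
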